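(* Let $n\ge1$ and set $\xi_0=1$, $\xi_{n+1}=-1$, and $\xi_k=\cos\frac{(2k-1)\pi}{2n+1}$ for $1\le k\le n$. Then $1=\xi_0>\xi_1>\cdots>\xi_n>\xi_{n+1}=-1$, and for each $1\le k\le n$ the polynomial $S_{2n}(x)$ has exactly one zero in the open interval $(\xi_{k+1},\xi_k)$. These $n$ zeros together with $x=1$ are all the zeros of $S_{2n}(x)$, and all of them are simple.
   Context: $U_n(x)$ is the Chebyshev polynomial of the second kind ($U_n(\cos\theta)=\sin((n+1)\theta)/\sin\theta$), with $U_{-1}=0$. For $n\ge0$, $S_{2n}(x)=(2nx+x+2n-1)U_n(x)-(2nx+3x+2n+1)U_{n-1}(x)$, a polynomial of degree $n+1$. *)

theory Defs
  imports "HOL-Analysis.Analysis" "HOL-Computational_Algebra.Polynomial"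
begin

fun chebU :: "nat \<Rightarrow> real poly" where
  "chebU 0 = 1"
| "chebU (Suc 0) = [:0, 2:]"
| "chebU (Suc (Suc n)) = [:0, 2:] * chebU (Suc n) - chebU n"

definition chebU_pred :: "nat \<Rightarrow> real poly" where
  "chebU_pred n = (if n = 0 then 0 else chebU (n - 1))"

text \<open>S_(2n)(x) = (2nx + x + 2n - 1) U_n(x) - (2nx + 3x + 2n + 1) U_(n-1)(x).\<close>
definition S2 :: "nat \<Rightarrow> real poly" where
  "S2 n = [: 2 * real n - 1, 2 * real n + 1 :] * chebU n
        - [: 2 * real n + 1, 2 * real n + 3 :] * chebU_pred n"

definition xi :: "nat \<Rightarrow> nat \<Rightarrow> real" where
  "xi n k = (if k = 0 then 1 else if k = n + 1 then -1
             else cos ((2 * real k - 1) * pi / (2 * real n + 1)))"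

end

theory Submission
  imports Defs
begin

text \<open>The sign of S_2n alternates along the nodes xi_1, ..., xi_n, -1, because at
  x = cos t with (2n+1) t = (2k-1) pi the values sin((n+1)t) and sin(nt) coincide and
  S_2n(cos t) sin t = -2 (1 + cos t) sin((n+1)t). Together with the root x = 1 this yields n + 1
  distinct real roots, one per interval and 1, which is at least the degree of S_2n; hence they
  exhaust the complex roots and are all simple.\<close>

lemma disjoint_nonempty_subsets_card_le:
  fixes J :: "'i \<Rightarrow> 'a set"
  assumes R: "finite R" "a \<in> R" and K: "finite K" "card R \<le> card K + 1"
    and J: "\<And>k. k \<in> K \<Longrightarrow> J k \<subseteq> R - {a}" "\<And>k. k \<in> K \<Longrightarrow> J k \<noteq> {}"
      "disjoint_family_on J K"
  shows "R = insert a (\<Union>k\<in>K. J k)" and "card R = card K + 1"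
    and "k \<in> K \<Longrightarrow> card (J k) = 1"
proof -
  define U where "U = insert a (\<Union>k\<in>K. J k)"
  have finite_J: "finite (J k)" if "k \<in> K" for k
    using J(1)[OF that] R(1) finite_subset by blast
  have card_J: "1 \<le> card (J k)" if "k \<in> K" for k
    using finite_J[OF that] J(2)[OF that] by (simp add: Suc_le_eq card_gt_0_iff)
  have "a \<notin> (\<Union>k\<in>K. J k)"
    using J(1) by blast
  then have card_U: "card U = (\<Sum>k\<in>K. card (J k)) + 1"
    using K(1) finite_J by (simp add: U_def card_UN_disjoint'[OF J(3)])
  have "U \<subseteq> R"
    using J(1) R(2) by (auto simp: U_def)
  then have "card U \<le> card R"
    using R(1) by (rule card_mono[rotated])
  moreover have "card K \<le> (\<Sum>k\<in>K. card (J k))"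
    using sum_mono[of K "\<lambda>_. 1" "\<lambda>k. card (J k)"] card_J by simp
  ultimately have sum_J: "(\<Sum>k\<in>K. card (J k)) = card K" and card_R: "card R = card U"
    using K(2) card_U by linarith+
  show "R = insert a (\<Union>k\<in>K. J k)"
    using card_subset_eq[OF R(1) \<open>U \<subseteq> R\<close>] card_R by (simp add: U_def)
  show "card R = card K + 1"
    using card_R card_U sum_J by simp
  show "card (J k) = 1" if "k \<in> K"
  proof (rule ccontr)
    assume "card (J k) \<noteq> 1"
    then have "1 < card (J k)"
      using card_J[OF that] by linarith
    then have "(\<Sum>k\<in>K. 1) < (\<Sum>k\<in>K. card (J k))"
      using card_J that K(1) by (intro sum_strict_mono_ex1 bexI[of _ k]) auto
    then show False
      using sum_J by simp
  qed
qed

lemma poly_roots_eq_if_card_ge_degree: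
  fixes p :: "'a::idom poly"
  assumes "p \<noteq> 0" "finite A" "A \<subseteq> {z. poly p z = 0}" "degree p \<le> card A"
  shows "{z. poly p z = 0} = A"
  using card_subset_eq[OF poly_roots_finite[OF assms(1)] assms(3)]
    card_poly_roots_bound[OF assms(1)] card_mono[OF poly_roots_finite[OF assms(1)] assms(3)] assms(4)
  by simp

lemma order_eq_1_if_card_roots_ge_degree:
  fixes p :: "'a::idom poly"
  assumes "p \<noteq> 0" "degree p \<le> card {z. poly p z = 0}" "poly p z = 0"
  shows "order z p = 1"
proof (rule ccontr)
  assume "order z p \<noteq> 1"
  moreover have order_pos: "0 < order w p" if "poly p w = 0" for w
    using assms(1) that by (simp add: order_gt_0_iff)
  ultimately have "1 < order z p"
    using assms(3) by (simp add: Suc_lessI)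
  then have "(\<Sum>w | poly p w = 0. 1) < (\<Sum>w | poly p w = 0. order w p)"
    using assms(3) order_pos poly_roots_finite[OF assms(1)]
    by (intro sum_strict_mono_ex1 bexI[of _ z]) (auto simp: Suc_le_eq)
  then show False
    using sum_order_le_degree[OF assms(1)] assms(2) by simp
qed

lemma poly_map_poly_of_real:
  "poly (map_poly of_real p) (of_real x) = (of_real (poly p x) :: 'a :: {real_algebra_1, comm_ring_1})"
  by (induction p) (auto simp: map_poly_pCons)

lemma complex_roots_of_real_poly_if_card_ge_degree:
  fixes p :: "real poly"
  assumes "p \<noteq> 0" "degree p \<le> card {x. poly p x = 0}"
  shows "{z. poly (map_poly complex_of_real p) z = 0} = complex_of_real ` {x. poly p x = 0}"
    and "poly (map_poly complex_of_real p) z = 0 \<Longrightarrow> order z (map_poly complex_of_real p) = 1"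
proof -
  define P where "P = map_poly complex_of_real p"
  have "P \<noteq> 0" "degree P \<le> card (complex_of_real ` {x. poly p x = 0})"
    using assms by (simp_all add: P_def degree_map_poly map_poly_eq_0_iff
        card_image[OF inj_on_subset[OF inj_of_real]])
  moreover have "complex_of_real ` {x. poly p x = 0} \<subseteq> {z. poly P z = 0}"
    by (auto simp: P_def poly_map_poly_of_real)
  ultimately have roots: "{z. poly P z = 0} = complex_of_real ` {x. poly p x = 0}"
    using poly_roots_finite[OF assms(1)] by (intro poly_roots_eq_if_card_ge_degree) auto
  then show "{z. poly (map_poly complex_of_real p) z = 0} = complex_of_real ` {x. poly p x = 0}"
    by (simp add: P_def)
  show "order z (map_poly complex_of_real p) = 1" if "poly (map_poly complex_of_real p) z = 0"
    using order_eq_1_if_card_roots_ge_degree[OF \<open>P \<noteq> 0\<close>] \<open>degree P \<le> _\<close> roots that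
    by (simp add: P_def)
qed

lemma degree_chebU_le: "degree (chebU n) \<le> n"
proof (induction n rule: chebU.induct)
  case (3 n)
  have "degree ([:0, 2:] * chebU (Suc n)) \<le> Suc (Suc n)"
    using degree_mult_le[of "[:0, 2::real:]" "chebU (Suc n)"] 3 by simp
  moreover have "degree (chebU n) \<le> Suc (Suc n)"
    using 3 by simp
  ultimately show ?case
    by (simp add: degree_diff_le)
qed simp_all

lemma poly_chebU_cos_mult_sin: "poly (chebU n) (cos t) * sin t = sin (real (n + 1) * t)"
proof (induction n rule: chebU.induct)
  case (3 n)
  have "poly (chebU (Suc (Suc n))) (cos t) * sin t
      = 2 * cos t * (poly (chebU (Suc n)) (cos t) * sin t) - poly (chebU n) (cos t) * sin t"
    by (simp add: algebra_simps)
  also have "\<dots> = 2 * cos t * sin (real (n + 2) * t) - sin (real (n + 2) * t - t)"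
  proof -
    have "real (Suc n + 1) * t = real (n + 2) * t" "real (n + 1) * t = real (n + 2) * t - t"
      by (simp_all add: algebra_simps)
    then show ?thesis
      using 3 by simp
  qed
  also have "\<dots> = sin (real (n + 2) * t + t)"
    using sin_add[of "real (n + 2) * t" t] sin_diff[of "real (n + 2) * t" t] by simp
  finally show ?case
    by (simp add: algebra_simps)
qed (simp_all add: sin_double)

lemma poly_chebU_pred_cos_mult_sin: "poly (chebU_pred n) (cos t) * sin t = sin (real n * t)"
  by (cases n) (simp_all add: chebU_pred_def poly_chebU_cos_mult_sin)

lemma poly_chebU_one: "poly (chebU n) 1 = real n + 1"
  by (induction n rule: chebU.induct) (auto simp: algebra_simps)

lemma poly_chebU_minus_one: "poly (chebU n) (-1) = (-1) ^ n * (real n + 1)"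
  by (induction n rule: chebU.induct) (auto simp: algebra_simps)

lemma degree_S2_le: "degree (S2 n) \<le> n + 1"
proof -
  have "degree (chebU_pred n) \<le> n"
    using degree_chebU_le[of "n - 1"] by (auto simp: chebU_pred_def)
  then have "degree ([: 2 * real n + 1, 2 * real n + 3 :] * chebU_pred n) \<le> n + 1"
    using degree_mult_le[of "[: 2 * real n + 1, 2 * real n + 3 :]" "chebU_pred n"] by simp
  moreover have "degree ([: 2 * real n - 1, 2 * real n + 1 :] * chebU n) \<le> n + 1"
    using degree_mult_le[of "[: 2 * real n - 1, 2 * real n + 1 :]" "chebU n"] degree_chebU_le[of n]
    by simp
  ultimately show ?thesis
    unfolding S2_def by (simp add: degree_diff_le)
qed

lemma poly_S2_one: "n \<ge> 1 \<Longrightarrow> poly (S2 n) 1 = 0"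
  by (simp add: S2_def chebU_pred_def poly_chebU_one algebra_simps of_nat_diff)

lemma poly_S2_minus_one: "poly (S2 n) (-1) = (-1) ^ (n + 1) * (4 * real n + 2)"
  by (cases n) (simp_all add: S2_def chebU_pred_def poly_chebU_minus_one algebra_simps)

lemma S2_nonzero: "S2 n \<noteq> 0"
  using poly_S2_minus_one[of n] by auto

lemma poly_S2_cos_mult_sin:
  "poly (S2 n) (cos t) * sin t
     = (2 * real n - 1 + (2 * real n + 1) * cos t) * sin (real (n + 1) * t)
     - (2 * real n + 1 + (2 * real n + 3) * cos t) * sin (real n * t)"
proof -
  have "poly (S2 n) (cos t) * sin t
      = (2 * real n - 1 + (2 * real n + 1) * cos t) * (poly (chebU n) (cos t) * sin t)
      - (2 * real n + 1 + (2 * real n + 3) * cos t) * (poly (chebU_pred n) (cos t) * sin t)"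
    by (simp add: S2_def algebra_simps)
  then show ?thesis
    by (simp only: poly_chebU_cos_mult_sin poly_chebU_pred_cos_mult_sin)
qed

definition xi_angle :: "nat \<Rightarrow> nat \<Rightarrow> real" where
  "xi_angle n k = (2 * real k - 1) * pi / (2 * real n + 1)"

lemma xi_angle_pos: "1 \<le> k \<Longrightarrow> 0 < xi_angle n k"
  by (auto simp: xi_angle_def intro!: divide_pos_pos)

lemma xi_angle_le_pi: "k \<le> n + 1 \<Longrightarrow> xi_angle n k \<le> pi"
  by (simp add: xi_angle_def divide_le_eq mult_right_mono)

lemma xi_angle_strict_mono: "j < k \<Longrightarrow> xi_angle n j < xi_angle n k"
  by (simp add: xi_angle_def divide_strict_right_mono)

lemma xi_angle_last: "xi_angle n (n + 1) = pi"
  by (simp add: xi_angle_def add.commute)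

lemma xi_eq_cos_xi_angle: "1 \<le> k \<Longrightarrow> k \<le> n + 1 \<Longrightarrow> xi n k = cos (xi_angle n k)"
  using xi_angle_last[of n] by (cases "k = n + 1") (auto simp: xi_def xi_angle_def)

lemma xi_strict_antimono:
  assumes "j < k" "k \<le> n + 1"
  shows "xi n k < xi n j"
proof (cases "j = 0")
  case True
  have "cos (xi_angle n k) < cos 0"
    using assms xi_angle_pos xi_angle_le_pi by (intro cos_monotone_0_pi) auto
  moreover have "xi n 0 = 1"
    by (simp add: xi_def)
  ultimately show ?thesis
    using assms True by (simp add: xi_eq_cos_xi_angle)
next
  case False
  have "cos (xi_angle n k) < cos (xi_angle n j)"
    using assms False xi_angle_pos[of j n] xi_angle_le_pi[of k n] xi_angle_strict_mono[of j k n]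
    by (intro cos_monotone_0_pi) auto
  then show ?thesis
    using assms False by (simp add: xi_eq_cos_xi_angle)
qed

lemma xi_antimono: "j \<le> k \<Longrightarrow> k \<le> n + 1 \<Longrightarrow> xi n k \<le> xi n j"
  using xi_strict_antimono[of j k n] by (cases "j = k") auto

lemma sin_mult_xi_angle:
  assumes "1 \<le> k"
  shows "sin (real (n + 1) * xi_angle n k) = (-1) ^ (k - 1) * cos (xi_angle n k / 2)"
    and "sin (real n * xi_angle n k) = (-1) ^ (k - 1) * cos (xi_angle n k / 2)"
proof -
  define t where "t = xi_angle n k"
  have "(2 * real n + 1) * t = (2 * real k - 1) * pi"
    by (simp add: t_def xi_angle_def)
  then have "real (n + 1) * t = real (k - 1) * pi + (pi / 2 + t / 2)"
    and "real n * t = real (k - 1) * pi + (pi / 2 - t / 2)"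
    using assms by (simp_all add: of_nat_diff algebra_simps)
  then show "sin (real (n + 1) * xi_angle n k) = (-1) ^ (k - 1) * cos (xi_angle n k / 2)"
    and "sin (real n * xi_angle n k) = (-1) ^ (k - 1) * cos (xi_angle n k / 2)"
    unfolding t_def[symmetric] by (simp_all add: sin_add sin_diff cos_add cos_diff)
qed

lemma S2_sign_at_xi:
  assumes "1 \<le> k" "k \<le> n + 1"
  shows "0 < (-1) ^ k * poly (S2 n) (xi n k)"
proof (cases "k = n + 1")
  case True
  then show ?thesis
    by (simp add: xi_def poly_S2_minus_one flip: power_mult_distrib)
next
  case False
  define t where "t = xi_angle n k"
  have t: "0 < t" "t < pi"
    using assms False xi_angle_pos[of k n] xi_angle_strict_mono[of k "n + 1" n] xi_angle_last[of n]
    by (simp_all add: t_def)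
  have value_at_t: "poly (S2 n) (cos t) * sin t = - 2 * (1 + cos t) * cos (t / 2) * (-1) ^ (k - 1)"
    unfolding poly_S2_cos_mult_sin t_def sin_mult_xi_angle[OF assms(1)] by (simp add: algebra_simps)
  have sign: "(-1) ^ k * (-1) ^ (k - 1) = (-1 :: real)"
    using assms(1) by (cases k) (simp_all flip: power_mult_distrib)
  have "((-1) ^ k * poly (S2 n) (cos t)) * sin t
      = - 2 * (1 + cos t) * cos (t / 2) * ((-1) ^ k * (-1) ^ (k - 1))"
    unfolding mult.assoc value_at_t by (simp only: ac_simps)
  also have "\<dots> = 2 * (1 + cos t) * cos (t / 2)"
    unfolding sign by (simp add: algebra_simps)
  finally have "((-1) ^ k * poly (S2 n) (cos t)) * sin t = 2 * (1 + cos t) * cos (t / 2)" .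
  moreover have "0 < 1 + cos t" "0 < cos (t / 2)"
    using t cos_monotone_0_pi[of t pi] by (simp_all add: cos_gt_zero_pi)
  ultimately have "0 < ((-1) ^ k * poly (S2 n) (cos t)) * sin t"
    by simp
  then show ?thesis
    using sin_gt_zero[OF t] assms False by (simp add: zero_less_mult_iff xi_eq_cos_xi_angle t_def)
qed

definition S2_roots_between :: "nat \<Rightarrow> nat \<Rightarrow> real set" where
  "S2_roots_between n k = {x. xi n (k + 1) < x \<and> x < xi n k \<and> poly (S2 n) x = 0}"

lemma S2_roots_between_nonempty:
  assumes "1 \<le> k" "k \<le> n"
  shows "S2_roots_between n k \<noteq> {}"
proof -
  have "0 < (-1) ^ k * poly (S2 n) (xi n k)" "0 < (-1) ^ (k + 1) * poly (S2 n) (xi n (k + 1))"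
    using assms S2_sign_at_xi[of k n] S2_sign_at_xi[of "k + 1" n] by simp_all
  then have "poly (S2 n) (xi n (k + 1)) * poly (S2 n) (xi n k) < 0"
    by (cases "even k") (auto simp: mult_less_0_iff zero_less_mult_iff)
  moreover have "xi n (k + 1) < xi n k"
    using assms by (simp add: xi_strict_antimono)
  ultimately obtain x where "xi n (k + 1) < x" "x < xi n k" "poly (S2 n) x = 0"
    using poly_IVT by blast
  then show ?thesis
    by (auto simp: S2_roots_between_def)
qed

lemma disjoint_family_on_S2_roots_between: "disjoint_family_on (S2_roots_between n) {..n}"
proof -
  have disjoint: "S2_roots_between n k \<inter> S2_roots_between n j = {}" if "j < k" "k \<le> n" for j k
    using xi_antimono[of "j + 1" k n] that by (auto simp: S2_roots_between_def)
  show ?thesis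
    unfolding disjoint_family_on_def
    by (metis disjoint Int_commute atMost_iff linorder_neqE_nat)
qed

lemma S2_real_roots:
  assumes "n \<ge> 1"
  shows "{x. poly (S2 n) x = 0} = insert 1 (\<Union>k\<in>{1..n}. S2_roots_between n k)"
    and "card {x. poly (S2 n) x = 0} = n + 1"
    and "k \<in> {1..n} \<Longrightarrow> card (S2_roots_between n k) = 1"
proof -
  define R where "R = {x. poly (S2 n) x = 0}"
  have "finite R" "card R \<le> n + 1"
    using poly_roots_finite card_poly_roots_bound[of "S2 n"] degree_S2_le[of n] S2_nonzero[of n]
    by (auto simp: R_def)
  moreover have "1 \<in> R"
    using poly_S2_one[OF assms] by (simp add: R_def)
  moreover have "S2_roots_between n k \<subseteq> R - {1}" if "k \<in> {1..n}" for k
  proof -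
    have "xi n k \<le> 1"
      using that xi_antimono[of 0 k n] by (simp add: xi_def)
    then show ?thesis
      by (auto simp: S2_roots_between_def R_def)
  qed
  moreover have "disjoint_family_on (S2_roots_between n) {1..n}"
    by (rule disjoint_family_on_mono[OF _ disjoint_family_on_S2_roots_between]) auto
  ultimately show "R = insert 1 (\<Union>k\<in>{1..n}. S2_roots_between n k)" "card R = n + 1"
    and "k \<in> {1..n} \<Longrightarrow> card (S2_roots_between n k) = 1"
    using disjoint_nonempty_subsets_card_le[of R 1 "{1..n}" "S2_roots_between n"]
      S2_roots_between_nonempty[of _ n] by auto
qed

theorem mainTheorem13:
  fixes n :: nat
  assumes "n \<ge> 1"
  shows "xi n 0 = 1 \<and> xi n (n + 1) = -1
    \<and> (\<forall>k \<le> n. xi n (k + 1) < xi n k)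
    \<and> (\<forall>k \<in> {1..n}. card {x. xi n (k + 1) < x \<and> x < xi n k \<and> poly (S2 n) x = 0} = 1)
    \<and> {z :: complex. poly (map_poly complex_of_real (S2 n)) z = 0}
        = complex_of_real ` ({1} \<union> (\<Union>k \<in> {1..n}. {x. xi n (k + 1) < x \<and> x < xi n k \<and> poly (S2 n) x = 0}))
    \<and> (\<forall>z :: complex. poly (map_poly complex_of_real (S2 n)) z = 0
          \<longrightarrow> order z (map_poly complex_of_real (S2 n)) = 1)"
proof -
  have "\<forall>k \<le> n. xi n (k + 1) < xi n k"
    by (simp add: xi_strict_antimono)
  moreover have "degree (S2 n) \<le> card {x. poly (S2 n) x = 0}"
    using degree_S2_le[of n] S2_real_roots(2)[OF assms] by simp
  ultimately show ?thesis
    unfolding S2_roots_between_def[symmetric]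
    using complex_roots_of_real_poly_if_card_ge_degree[OF S2_nonzero] S2_real_roots[OF assms]
    by (simp add: xi_def)
qed

end
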